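(* Let a group $G$ act freely on a connected weighted simplicial complex $\Omega$ on $[n]$, let $\mathcal V_0,\ldots,\mathcal V_n$ be complex vector spaces with $\mathcal V_i=\mathcal V_j$ whenever $i,j$ lie in the same $G$-orbit, and $\mathcal V=\mathcal V_0\otimes\cdots\otimes\mathcal V_n$. Then every $G$-invariant $v\in\mathcal V$ satisfies ${\rm rank}_{(\Omega,G)}(v)<\infty$. Moreover, for every decomposition $v=\sum_j w^{[0]}_j\otimes\cdots\otimes w^{[n]}_j$ of $v$ as a finite sum of elementary tensors ($w^{[i]}_j\in\mathcal V_i$), there is an $(\Omega,G)$-decomposition of $v$ all of whose local vectors are nonnegative real multiples of vectors $w^{[k]}_j$ from this decomposition.
   Context: $[n]=\{0,\ldots,n\}$. A weighted simplicial complex (wsc) on $[n]$ is a function $\Omega\colon\mathcal P([n])\to\mathbb N=\{0,1,\ldots\}$ such that $S_1\subseteq S_2$ implies $\Omega(S_1)\mid\Omega(S_2)$; simplices are sets with $\Omega(S)\neq0$, every singleton is assumed to be a simplex, facets are inclusion-maximal simplices, $\mathcal F$ is the set of facets. $\widetilde{\mathcal F}$ is the multiset containing each facet $F$ exactly $\Omega(F)$ times, with collapse map $c\colon\widetilde{\mathcal F}\to\mathcal F$; for $i\in[n]$, $\widetilde{\mathcal F}_i\subseteq\widetilde{\mathcal F}$ consists of the copies of facets containing $i$. $\Omega$ is connected if any two vertices are joined by a chain of vertices in which consecutive ones lie in a common facet. A group action of $G$ on $\Omega$ is an action of $G$ on $[n]$ with $\Omega(gS)=\Omega(S)$ for all $S,g$,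 together with an action of $G$ on $\widetilde{\mathcal F}$ such that $c(gx)=gc(x)$; then $g$ maps $\widetilde{\mathcal F}_i$ bijectively onto $\widetilde{\mathcal F}_{gi}$. The action is free if the action on $\widetilde{\mathcal F}$ is free. $G$ acts on $\mathcal V$ by permuting tensor factors according to its action on $[n]$; $v$ is $G$-invariant if fixed by this action. For $\beta\colon\widetilde{\mathcal F}_i\to\mathcal I$ and $g\in G$, ${}^g\beta\colon\widetilde{\mathcal F}_{gi}\to\mathcal I$ is $x\mapsto\beta(g^{-1}x)$; for $\alpha\colon\widetilde{\mathcal F}\to\mathcal I$, $\alpha_{\mid i}$ is its restriction to $\widetilde{\mathcal F}_i$. An $(\Omega,G)$-decomposition of $v\in\mathcal V$ consists of a finite set $\mathcal I$ and local vectors $v^{[i]}_\beta\in\mathcal V_i$ ($i\in[n]$, $\beta\in\mathcal I^{\widetilde{\mathcal F}_i}$) such that (a) $v=\sum_{\alpha\in\mathcal I^{\widetilde{\mathcal F}}}v^{[0]}_{\alpha_{\mid0}}\otimes\cdots\otimes v^{[n]}_{\alpha_{\mid n}}$ and (b) $v^{[i]}_\beta=v^{[gi]}_{{}^g\beta}$ for all $i\in[n]$, $g\in G$, $\beta\in\mathcal I^{\widetilde{\mathcal F}_i}$. ${\rm rank}_{(\Omega,G)}(v)$ is the minimal $|\mathcal I|$ over all such decompositions ($\infty$ if none exists). *)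

theory Defs
  imports Complex_Main "HOL-Algebra.Group_Action" "HOL-Library.Extended_Nat" "HOL-Library.Function_Algebras"
begin

definition wsc :: "nat \<Rightarrow> (nat set \<Rightarrow> nat) \<Rightarrow> bool" where
  "wsc n \<Omega> \<longleftrightarrow>
     (\<forall>S1 S2. S1 \<subseteq> S2 \<and> S2 \<subseteq> {..n} \<longrightarrow> \<Omega> S1 dvd \<Omega> S2) \<and>
     (\<forall>i\<le>n. \<Omega> {i} \<noteq> 0)"

definition simplex :: "nat \<Rightarrow> (nat set \<Rightarrow> nat) \<Rightarrow> nat set \<Rightarrow> bool" where
  "simplex n \<Omega> S \<longleftrightarrow> S \<subseteq> {..n} \<and> \<Omega> S \<noteq> 0"

definition facet :: "nat \<Rightarrow> (nat set \<Rightarrow> nat) \<Rightarrow> nat set \<Rightarrow> bool" where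
  "facet n \<Omega> F \<longleftrightarrow> simplex n \<Omega> F \<and> (\<forall>T. simplex n \<Omega> T \<and> F \<subseteq> T \<longrightarrow> T = F)"

text \<open>The multiset of facets with multiplicities: facet F occurs as the copies (F,k), k < Omega F.
  The collapse map is fst.\<close>
definition tF :: "nat \<Rightarrow> (nat set \<Rightarrow> nat) \<Rightarrow> (nat set \<times> nat) set" where
  "tF n \<Omega> = {(F, k). facet n \<Omega> F \<and> k < \<Omega> F}"

definition tFi :: "nat \<Rightarrow> (nat set \<Rightarrow> nat) \<Rightarrow> nat \<Rightarrow> (nat set \<times> nat) set" where
  "tFi n \<Omega> i = {x \<in> tF n \<Omega>. i \<in> fst x}"

definition wsc_connected :: "nat \<Rightarrow> (nat set \<Rightarrow> nat) \<Rightarrow> bool" where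
  "wsc_connected n \<Omega> \<longleftrightarrow>
     (\<forall>i\<le>n. \<forall>j\<le>n. (\<lambda>a b. a \<le> n \<and> b \<le> n \<and> (\<exists>F. facet n \<Omega> F \<and> a \<in> F \<and> b \<in> F))\<^sup>*\<^sup>* i j)"

definition wsc_action ::
  "nat \<Rightarrow> (nat set \<Rightarrow> nat) \<Rightarrow> ('g, 'm) monoid_scheme \<Rightarrow> ('g \<Rightarrow> nat \<Rightarrow> nat)
     \<Rightarrow> ('g \<Rightarrow> nat set \<times> nat \<Rightarrow> nat set \<times> nat) \<Rightarrow> bool" where
  "wsc_action n \<Omega> G \<sigma> \<tau> \<longleftrightarrow>
     group_action G {..n} \<sigma> \<and> group_action G (tF n \<Omega>) \<tau> \<and>
     (\<forall>g\<in>carrier G. \<forall>S. S \<subseteq> {..n} \<longrightarrow> \<Omega> (\<sigma> g ` S) = \<Omega> S) \<and>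
     (\<forall>g\<in>carrier G. \<forall>x\<in>tF n \<Omega>. fst (\<tau> g x) = \<sigma> g ` fst x)"

definition free_wsc_action ::
  "nat \<Rightarrow> (nat set \<Rightarrow> nat) \<Rightarrow> ('g, 'm) monoid_scheme \<Rightarrow> ('g \<Rightarrow> nat \<Rightarrow> nat)
     \<Rightarrow> ('g \<Rightarrow> nat set \<times> nat \<Rightarrow> nat set \<times> nat) \<Rightarrow> bool" where
  "free_wsc_action n \<Omega> G \<sigma> \<tau> \<longleftrightarrow> wsc_action n \<Omega> G \<sigma> \<tau> \<and>
     (\<forall>g\<in>carrier G. \<forall>x\<in>tF n \<Omega>. \<tau> g x = x \<longrightarrow> g = \<one>\<^bsub>G\<^esub>)"

definition vsp :: "'b set \<Rightarrow> ('b \<Rightarrow> complex) set" where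
  "vsp B = {w. finite {b. w b \<noteq> 0} \<and> {b. w b \<noteq> 0} \<subseteq> B}"

text \<open>V_0 (x) ... (x) V_n, with V_i = vsp (B i): finitely supported functions on the product basis.\<close>
definition tensor_sp :: "nat \<Rightarrow> (nat \<Rightarrow> 'b set) \<Rightarrow> ((nat \<Rightarrow> 'b) \<Rightarrow> complex) set" where
  "tensor_sp n B = {v. finite {x. v x \<noteq> 0} \<and> {x. v x \<noteq> 0} \<subseteq> PiE {..n} B}"

definition etensor :: "nat \<Rightarrow> (nat \<Rightarrow> 'b \<Rightarrow> complex) \<Rightarrow> (nat \<Rightarrow> 'b) \<Rightarrow> complex" where
  "etensor n w x = (if x \<in> extensional {..n} then (\<Prod>i\<le>n. w i (x i)) else 0)"

definition G_invariant ::
  "nat \<Rightarrow> ('g, 'm) monoid_scheme \<Rightarrow> ('g \<Rightarrow> nat \<Rightarrow> nat) \<Rightarrow> (nat \<Rightarrow> 'b set)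
     \<Rightarrow> ((nat \<Rightarrow> 'b) \<Rightarrow> complex) \<Rightarrow> bool" where
  "G_invariant n G \<sigma> B v \<longleftrightarrow>
     (\<forall>g\<in>carrier G. \<forall>x\<in>PiE {..n} B. v (restrict (\<lambda>i. x (\<sigma> g i)) {..n}) = v x)"

definition is_OG_decomp ::
  "nat \<Rightarrow> (nat set \<Rightarrow> nat) \<Rightarrow> ('g, 'm) monoid_scheme \<Rightarrow> ('g \<Rightarrow> nat \<Rightarrow> nat)
     \<Rightarrow> ('g \<Rightarrow> nat set \<times> nat \<Rightarrow> nat set \<times> nat) \<Rightarrow> (nat \<Rightarrow> 'b set)
     \<Rightarrow> ((nat \<Rightarrow> 'b) \<Rightarrow> complex) \<Rightarrow> nat set
     \<Rightarrow> (nat \<Rightarrow> (nat set \<times> nat \<Rightarrow> nat) \<Rightarrow> 'b \<Rightarrow> complex) \<Rightarrow> bool" where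
  "is_OG_decomp n \<Omega> G \<sigma> \<tau> B v I loc \<longleftrightarrow>
     finite I \<and>
     (\<forall>i\<le>n. \<forall>\<beta>\<in>tFi n \<Omega> i \<rightarrow>\<^sub>E I. loc i \<beta> \<in> vsp (B i)) \<and>
     v = (\<Sum>\<alpha>\<in>tF n \<Omega> \<rightarrow>\<^sub>E I. etensor n (\<lambda>i. loc i (restrict \<alpha> (tFi n \<Omega> i)))) \<and>
     (\<forall>i\<le>n. \<forall>g\<in>carrier G. \<forall>\<beta>\<in>tFi n \<Omega> i \<rightarrow>\<^sub>E I.
        loc i \<beta> = loc (\<sigma> g i) (restrict (\<lambda>x. \<beta> (\<tau> (inv\<^bsub>G\<^esub> g) x)) (tFi n \<Omega> (\<sigma> g i))))"

definition rank_OG ::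
  "nat \<Rightarrow> (nat set \<Rightarrow> nat) \<Rightarrow> ('g, 'm) monoid_scheme \<Rightarrow> ('g \<Rightarrow> nat \<Rightarrow> nat)
     \<Rightarrow> ('g \<Rightarrow> nat set \<times> nat \<Rightarrow> nat set \<times> nat) \<Rightarrow> (nat \<Rightarrow> 'b set)
     \<Rightarrow> ((nat \<Rightarrow> 'b) \<Rightarrow> complex) \<Rightarrow> enat" where
  "rank_OG n \<Omega> G \<sigma> \<tau> B v =
     (if \<exists>I loc. is_OG_decomp n \<Omega> G \<sigma> \<tau> B v I loc
      then enat (LEAST k. \<exists>I loc. is_OG_decomp n \<Omega> G \<sigma> \<tau> B v I loc \<and> card I = k)
      else \<infinity>)"

end

theory Submission
  imports Defs
begin

text \<open>
  Let \<open>v = \<Sum>_j w_j^[0] \<otimes> ... \<otimes> w_j^[n]\<close> and take the index set \<open>I\<close> to be (a code of)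
  \<open>J \<times> G\<close>. As \<open>G\<close> acts freely on the facet copies, every copy is \<open>g x0\<close> for a unique \<open>g\<close>
  and the representative \<open>x0\<close> of its orbit; the pair \<open>(j, h)\<close> labels it by \<open>(j, h g)\<close>.
  At vertex \<open>i\<close> the restriction of the labelling of \<open>(j, h)\<close> gets the local vector
  \<open>c w_j^[h i]\<close> and every other local labelling gets 0, which is \<open>G\<close>-equivariant.
  By connectedness the global labellings of the first kind at every vertex are exactly those of the
  pairs \<open>(j, h)\<close>, so the decomposition sums to
  \<open>c^(n+1) \<Sum>_h \<Sum>_j \<otimes>_i w_j^[h i] = c^(n+1) |G| v\<close> by invariance, which is \<open>v\<close> for
  \<open>c = |G|^(-1/(n+1))\<close>. Finiteness of the rank follows by expanding \<open>v\<close> in the product basis.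
\<close>

section \<open>Free group actions\<close>

sublocale group_action \<subseteq> group G
  by (rule group_hom.axioms(1)[OF group_hom])

context group_action
begin

lemma action_inv_left: "g \<in> carrier G \<Longrightarrow> x \<in> E \<Longrightarrow> \<phi> (inv g) (\<phi> g x) = x"
  using orbit_sym_aux by blast

lemma action_inv_right: "g \<in> carrier G \<Longrightarrow> x \<in> E \<Longrightarrow> \<phi> g (\<phi> (inv g) x) = x"
  using action_inv_left[of "inv g" x] by simp

lemma action_closed: "g \<in> carrier G \<Longrightarrow> x \<in> E \<Longrightarrow> \<phi> g x \<in> E"
  using element_image by blast

lemma orbit_action:
  assumes g: "g \<in> carrier G" and x: "x \<in> E"
  shows "orbit G \<phi> (\<phi> g x) = orbit G \<phi> x"
proof -
  have "\<phi> h (\<phi> g x) = \<phi> (h \<otimes> g) x" if "h \<in> carrier G" for h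
    using composition_rule[OF x that g] by simp
  moreover have "\<phi> h x = \<phi> (h \<otimes> inv g) (\<phi> g x)" if "h \<in> carrier G" for h
    using composition_rule[OF action_closed[OF g x] that inv_closed[OF g]] action_inv_left[OF g x]
    by simp
  ultimately show ?thesis
    unfolding orbit_def using g by (blast intro: m_closed inv_closed)
qed

end

locale free_group_action = group_action +
  assumes free: "\<lbrakk>g \<in> carrier G; x \<in> E; \<phi> g x = x\<rbrakk> \<Longrightarrow> g = \<one>"
begin

lemma action_eq_imp_eq:
  assumes "g \<in> carrier G" "h \<in> carrier G" "x \<in> E" "\<phi> g x = \<phi> h x"
  shows "g = h"
proof -
  have "\<phi> (inv h \<otimes> g) x = x"
    using assms composition_rule[OF assms(3) inv_closed[OF assms(2)] assms(1)] action_inv_left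
    by simp
  then have "inv h \<otimes> g = \<one>"
    using free assms by simp
  then show ?thesis
    using inv_solve_left'[of \<one> h g] assms by simp
qed

lemma finite_carrier:
  assumes "finite E" "x \<in> E"
  shows "finite (carrier G)"
proof (rule finite_imageD)
  show "inj_on (\<lambda>g. \<phi> g x) (carrier G)"
    using action_eq_imp_eq assms(2) by (meson inj_onI)
  show "finite ((\<lambda>g. \<phi> g x) ` carrier G)"
    using assms action_closed by (meson finite_subset image_subsetI)
qed

definition orbit_rep where
  "orbit_rep x = (SOME y. y \<in> orbit G \<phi> x)"

definition orbit_coord where
  "orbit_coord x = (THE g. g \<in> carrier G \<and> \<phi> g (orbit_rep x) = x)"

lemma orbit_rep_action: "g \<in> carrier G \<Longrightarrow> x \<in> E \<Longrightarrow> orbit_rep (\<phi> g x) = orbit_rep x"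
  unfolding orbit_rep_def by (simp add: orbit_action)

lemma orbit_rep_props:
  assumes x: "x \<in> E"
  shows orbit_rep_closed: "orbit_rep x \<in> E"
    and orbit_rep_moves_to: "\<exists>g\<in>carrier G. \<phi> g (orbit_rep x) = x"
proof -
  have "orbit_rep x \<in> orbit G \<phi> x"
    unfolding orbit_rep_def using orbit_refl[OF x] by (rule someI)
  then obtain h where h: "h \<in> carrier G" "orbit_rep x = \<phi> h x"
    unfolding orbit_def by blast
  then show "orbit_rep x \<in> E"
    using x action_closed by simp
  have "\<phi> (inv h) (orbit_rep x) = x"
    using h x action_inv_left by simp
  then show "\<exists>g\<in>carrier G. \<phi> g (orbit_rep x) = x"
    using inv_closed[OF h(1)] by blast
qed

lemma orbit_coord_props:
  assumes x: "x \<in> E"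
  shows orbit_coord_closed: "orbit_coord x \<in> carrier G"
    and action_orbit_coord: "\<phi> (orbit_coord x) (orbit_rep x) = x"
proof -
  obtain g where g: "g \<in> carrier G" "\<phi> g (orbit_rep x) = x"
    using orbit_rep_moves_to[OF x] by blast
  have "h = g" if "h \<in> carrier G" "\<phi> h (orbit_rep x) = x" for h
    using action_eq_imp_eq[of h g "orbit_rep x"] g that orbit_rep_closed[OF x] by simp
  with g have "\<exists>!g. g \<in> carrier G \<and> \<phi> g (orbit_rep x) = x"
    by blast
  then have "orbit_coord x \<in> carrier G \<and> \<phi> (orbit_coord x) (orbit_rep x) = x"
    unfolding orbit_coord_def by (rule theI')
  then show "orbit_coord x \<in> carrier G" "\<phi> (orbit_coord x) (orbit_rep x) = x"
    by blast+
qed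

lemma orbit_coord_action:
  assumes g: "g \<in> carrier G" and x: "x \<in> E"
  shows "orbit_coord (\<phi> g x) = g \<otimes> orbit_coord x"
proof (rule action_eq_imp_eq)
  have gx: "\<phi> g x \<in> E"
    using g x by (rule action_closed)
  have "\<phi> (orbit_coord (\<phi> g x)) (orbit_rep x) = \<phi> g x"
    using action_orbit_coord[OF gx] orbit_rep_action[OF g x] by simp
  also have "\<dots> = \<phi> (g \<otimes> orbit_coord x) (orbit_rep x)"
    using composition_rule[OF orbit_rep_closed[OF x] g orbit_coord_closed[OF x]]
      action_orbit_coord[OF x] by simp
  finally show "\<phi> (orbit_coord (\<phi> g x)) (orbit_rep x) = \<phi> (g \<otimes> orbit_coord x) (orbit_rep x)" .
  show "orbit_coord (\<phi> g x) \<in> carrier G" "g \<otimes> orbit_coord x \<in> carrier G"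
    using gx g x orbit_coord_closed by auto
  show "orbit_rep x \<in> E"
    using x orbit_rep_closed by blast
qed

end

section \<open>Facets and their copies\<close>

lemma facet_subset: "facet n \<Omega> F \<Longrightarrow> F \<subseteq> {..n}"
  unfolding facet_def simplex_def by blast

lemma simplex_imp_facet_superset:
  assumes "simplex n \<Omega> S"
  shows "\<exists>F. facet n \<Omega> F \<and> S \<subseteq> F"
proof -
  define A where "A = {U. simplex n \<Omega> U \<and> S \<subseteq> U}"
  have "finite A"
    by (rule finite_subset[of _ "Pow {..n}"]) (auto simp: A_def simplex_def)
  moreover have "A \<noteq> {}"
    using assms unfolding A_def by blast
  ultimately obtain F where F: "F \<in> A" and max: "\<forall>U\<in>A. F \<subseteq> U \<longrightarrow> F = U"
    using finite_has_maximal by blast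
  have "facet n \<Omega> F"
    unfolding facet_def using F max by (auto simp: A_def)
  then show ?thesis
    using F unfolding A_def by blast
qed

lemma wsc_singleton_simplex: "wsc n \<Omega> \<Longrightarrow> i \<le> n \<Longrightarrow> simplex n \<Omega> {i}"
  unfolding wsc_def simplex_def by auto

lemma wsc_facet_nonempty:
  assumes "wsc n \<Omega>" "facet n \<Omega> F"
  shows "F \<noteq> {}"
  using assms wsc_singleton_simplex[OF assms(1), of 0] unfolding facet_def by blast

lemma finite_tF: "finite (tF n \<Omega>)"
  by (rule finite_subset[of _ "SIGMA F:Pow {..n}. {..<\<Omega> F}"])
    (auto simp: tF_def facet_def simplex_def)

lemma facet_in_tFi:
  assumes "facet n \<Omega> F" "i \<in> F"
  shows "(F, 0) \<in> tFi n \<Omega> i"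
  using assms unfolding tFi_def tF_def facet_def simplex_def by auto

lemma tFi_subset: "tFi n \<Omega> i \<subseteq> tF n \<Omega>"
  unfolding tFi_def by blast

lemma wsc_tFi_nonempty:
  assumes "wsc n \<Omega>" "i \<le> n"
  shows "tFi n \<Omega> i \<noteq> {}"
  using simplex_imp_facet_superset[OF wsc_singleton_simplex[OF assms]] facet_in_tFi by blast

lemma wsc_tF_covered:
  assumes "wsc n \<Omega>" "x \<in> tF n \<Omega>"
  obtains i where "i \<le> n" "x \<in> tFi n \<Omega> i"
proof -
  have "facet n \<Omega> (fst x)"
    using assms(2) unfolding tF_def by auto
  then obtain i where "i \<in> fst x" "i \<le> n"
    using wsc_facet_nonempty[OF assms(1)] facet_subset by blast
  then show ?thesis
    using that assms(2) unfolding tFi_def by blast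
qed

lemma wsc_connected_constant:
  assumes "wsc_connected n \<Omega>"
    and facet_const: "\<And>F a b. facet n \<Omega> F \<Longrightarrow> a \<in> F \<Longrightarrow> b \<in> F \<Longrightarrow> f a = f b"
    and "i \<le> n" "j \<le> n"
  shows "f i = f j"
proof -
  let ?R = "\<lambda>a b. a \<le> n \<and> b \<le> n \<and> (\<exists>F. facet n \<Omega> F \<and> a \<in> F \<and> b \<in> F)"
  have "?R\<^sup>*\<^sup>* i j"
    using assms unfolding wsc_connected_def by blast
  then show ?thesis
    by induction (use facet_const in metis)+
qed

section \<open>Elementary tensors and invariance\<close>

lemma sum_fun_apply: "(\<Sum>i\<in>A. f i) x = (\<Sum>i\<in>A. f i x)"
  by (induction A rule: infinite_finite_induct) auto

lemma etensor_cong: "(\<And>i. i \<le> n \<Longrightarrow> f i = g i) \<Longrightarrow> etensor n f = etensor n g"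
  unfolding etensor_def by (intro ext prod.cong refl if_cong) auto

lemma etensor_eq_0:
  assumes "i \<le> n" "f i = (\<lambda>_. 0)"
  shows "etensor n f = 0"
proof -
  have "(\<Prod>k\<le>n. f k (x k)) = 0" for x
    using assms by (intro prod_zero) (auto intro!: bexI[of _ i])
  then show ?thesis
    unfolding etensor_def by auto
qed

lemma etensor_scale: "etensor n (\<lambda>i b. c * f i b) x = c ^ Suc n * etensor n f x"
  unfolding etensor_def by (simp add: prod.distrib)

lemma etensor_reindex:
  assumes "bij_betw \<pi> {..n} {..n}" "\<And>i. i \<le> n \<Longrightarrow> \<pi>' (\<pi> i) = i" "y \<in> extensional {..n}"
  shows "etensor n (\<lambda>i. f (\<pi> i)) y = etensor n f (restrict (\<lambda>k. y (\<pi>' k)) {..n})"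
proof -
  have "(\<Prod>i\<le>n. f (\<pi> i) (y i)) = (\<Prod>i\<le>n. f (\<pi> i) (y (\<pi>' (\<pi> i))))"
    using assms(2) by simp
  also have "\<dots> = (\<Prod>k\<le>n. f k (y (\<pi>' k)))"
    using prod.reindex_bij_betw[OF assms(1), of "\<lambda>k. f k (y (\<pi>' k))"] .
  finally show ?thesis
    unfolding etensor_def using assms(3) by simp
qed

lemma tensor_sp_vanishes: "v \<in> tensor_sp n B \<Longrightarrow> y \<notin> PiE {..n} B \<Longrightarrow> v y = 0"
  unfolding tensor_sp_def by blast

lemma G_invariant_extensional:
  assumes action: "group_action G {..n} \<sigma>"
    and B_invariant: "\<forall>g\<in>carrier G. \<forall>i\<le>n. B (\<sigma> g i) = B i"
    and v: "v \<in> tensor_sp n B" "G_invariant n G \<sigma> B v"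
    and g: "g \<in> carrier G" and y: "y \<in> extensional {..n}"
  shows "v (restrict (\<lambda>i. y (\<sigma> g i)) {..n}) = v y"
proof (cases "y \<in> PiE {..n} B")
  case True
  then show ?thesis
    using v(2) g unfolding G_invariant_def by blast
next
  case False
  interpret group_action G "{..n}" \<sigma>
    by (fact action)
  obtain i where i: "i \<le> n" "y i \<notin> B i"
    using False y by (auto simp: PiE_def Pi_def)
  have k: "\<sigma> (inv\<^bsub>G\<^esub> g) i \<le> n" "\<sigma> g (\<sigma> (inv\<^bsub>G\<^esub> g) i) = i"
    using action_closed[OF inv_closed[OF g]] action_inv_right[OF g] i(1) by auto
  have "B (\<sigma> (inv\<^bsub>G\<^esub> g) i) = B i"
    using B_invariant inv_closed[OF g] i(1) by blast
  then have "restrict (\<lambda>i. y (\<sigma> g i)) {..n} \<notin> PiE {..n} B"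
    using i k by (auto simp: PiE_def Pi_def)
  then show ?thesis
    using False tensor_sp_vanishes[OF v(1)] by simp
qed

lemma G_invariant_permuted_decomp:
  assumes action: "group_action G {..n} \<sigma>"
    and B_invariant: "\<forall>g\<in>carrier G. \<forall>i\<le>n. B (\<sigma> g i) = B i"
    and v: "v \<in> tensor_sp n B" "G_invariant n G \<sigma> B v"
    and v_decomp: "v = (\<Sum>j\<in>J. etensor n (w j))"
    and h: "h \<in> carrier G"
  shows "(\<Sum>j\<in>J. etensor n (\<lambda>i. w j (\<sigma> h i))) = v"
proof
  interpret group_action G "{..n}" \<sigma>
    by (fact action)
  fix y
  show "(\<Sum>j\<in>J. etensor n (\<lambda>i. w j (\<sigma> h i))) y = v y"
  proof (cases "y \<in> extensional {..n}")
    case True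
    let ?y' = "restrict (\<lambda>k. y (\<sigma> (inv\<^bsub>G\<^esub> h) k)) {..n}"
    have bij: "bij_betw (\<sigma> h) {..n} {..n}"
      using bij_prop0[OF h] unfolding Bij_def by blast
    have "(\<Sum>j\<in>J. etensor n (\<lambda>i. w j (\<sigma> h i))) y = (\<Sum>j\<in>J. etensor n (w j) ?y')"
      unfolding sum_fun_apply
      using etensor_reindex[OF bij _ True, of "\<sigma> (inv\<^bsub>G\<^esub> h)"] action_inv_left[OF h]
      by (intro sum.cong) auto
    also have "\<dots> = v ?y'"
      using v_decomp by (simp add: sum_fun_apply)
    also have "\<dots> = v y"
      using G_invariant_extensional[OF action B_invariant v inv_closed[OF h] True] by simp
    finally show ?thesis .
  next
    case False
    then have "y \<notin> PiE {..n} B"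
      by (auto simp: PiE_def)
    then show ?thesis
      using False tensor_sp_vanishes[OF v(1)] unfolding sum_fun_apply etensor_def by simp
  qed
qed

section \<open>Equivariant labellings of the facet copies\<close>

locale free_wsc =
  fixes n :: nat and \<Omega> :: "nat set \<Rightarrow> nat" and G :: "('g, 'm) monoid_scheme" (structure)
    and \<sigma> :: "'g \<Rightarrow> nat \<Rightarrow> nat" and \<tau> :: "'g \<Rightarrow> nat set \<times> nat \<Rightarrow> nat set \<times> nat"
  assumes wsc: "wsc n \<Omega>" and connected: "wsc_connected n \<Omega>"
    and free_action: "free_wsc_action n \<Omega> G \<sigma> \<tau>"
begin

sublocale group G
  using free_action unfolding free_wsc_action_def wsc_action_def group_action_def group_hom_def
  by blast

sublocale vertices: group_action G "{..n}" \<sigma>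
  using free_action unfolding free_wsc_action_def wsc_action_def by blast

sublocale copies: free_group_action G "tF n \<Omega>" \<tau>
  using free_action
  unfolding free_wsc_action_def wsc_action_def free_group_action_def free_group_action_axioms_def
  by blast

lemma copy_action_tFi:
  assumes "g \<in> carrier G" "x \<in> tFi n \<Omega> i"
  shows "\<tau> g x \<in> tFi n \<Omega> (\<sigma> g i)"
proof -
  have "fst (\<tau> g x) = \<sigma> g ` fst x"
    using free_action assms unfolding free_wsc_action_def wsc_action_def tFi_def by blast
  then show ?thesis
    using assms copies.action_closed unfolding tFi_def by auto
qed

lemma finite_carrier: "finite (carrier G)"
  using copies.finite_carrier[OF finite_tF] wsc_tFi_nonempty[OF wsc, of 0] tFi_subset by blast

end

locale free_wsc_labelling = free_wsc n \<Omega> G \<sigma> \<tau>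
  for n \<Omega> and G :: "('g, 'm) monoid_scheme" (structure) and \<sigma> \<tau> +
  fixes J :: "'j set" and d :: "'j \<times> 'g \<Rightarrow> nat"
  assumes finite_J: "finite J" and inj_d: "inj_on d (J \<times> carrier G)"
begin

definition label :: "'j \<times> 'g \<Rightarrow> nat set \<times> nat \<Rightarrow> nat" where
  "label p x = d (fst p, snd p \<otimes> copies.orbit_coord x)"

definition local_label :: "nat \<Rightarrow> 'j \<times> 'g \<Rightarrow> nat set \<times> nat \<Rightarrow> nat" where
  "local_label i p = restrict (label p) (tFi n \<Omega> i)"

definition translate :: "'g \<Rightarrow> nat \<Rightarrow> (nat set \<times> nat \<Rightarrow> nat) \<Rightarrow> nat set \<times> nat \<Rightarrow> nat" where
  "translate g i \<beta> = restrict (\<lambda>x. \<beta> (\<tau> (inv g) x)) (tFi n \<Omega> (\<sigma> g i))"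

lemma label_in_image:
  assumes "p \<in> J \<times> carrier G" "x \<in> tF n \<Omega>"
  shows "label p x \<in> d ` (J \<times> carrier G)"
  using assms copies.orbit_coord_closed unfolding label_def by (auto simp: mem_Times_iff)

lemma label_eq_imp_eq:
  assumes p: "p \<in> J \<times> carrier G" and q: "q \<in> J \<times> carrier G" and x: "x \<in> tF n \<Omega>"
    and eq: "label p x = label q x"
  shows "p = q"
proof -
  have x_coord: "copies.orbit_coord x \<in> carrier G"
    using copies.orbit_coord_closed[OF x] .
  have "(fst p, snd p \<otimes> copies.orbit_coord x) = (fst q, snd q \<otimes> copies.orbit_coord x)"
    using inj_onD[OF inj_d eq[unfolded label_def]] p q x_coord by (auto simp: mem_Times_iff)
  then show ?thesis
    using p q x_coord by (auto simp: mem_Times_iff prod_eq_iff)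
qed

lemma inj_on_local_label:
  assumes "i \<le> n"
  shows "inj_on (local_label i) (J \<times> carrier G)"
proof (rule inj_onI)
  fix p q assume pq: "p \<in> J \<times> carrier G" "q \<in> J \<times> carrier G" "local_label i p = local_label i q"
  obtain x where x: "x \<in> tFi n \<Omega> i"
    using wsc_tFi_nonempty[OF wsc assms] by blast
  then have "label p x = label q x"
    using fun_cong[OF pq(3), of x] unfolding local_label_def by simp
  then show "p = q"
    using label_eq_imp_eq pq x tFi_subset by blast
qed

lemma label_action:
  assumes "p \<in> J \<times> carrier G" "g \<in> carrier G" "x \<in> tF n \<Omega>"
  shows "label p (\<tau> g x) = label (fst p, snd p \<otimes> g) x"
  using assms copies.orbit_coord_action copies.orbit_coord_closed
  unfolding label_def by (auto simp: mem_Times_iff m_assoc)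

lemma translate_local_label:
  assumes p: "p \<in> J \<times> carrier G" and g: "g \<in> carrier G" and i: "i \<le> n"
  shows "translate g i (local_label i p) = local_label (\<sigma> g i) (fst p, snd p \<otimes> inv g)"
proof
  fix x
  show "translate g i (local_label i p) x = local_label (\<sigma> g i) (fst p, snd p \<otimes> inv g) x"
  proof (cases "x \<in> tFi n \<Omega> (\<sigma> g i)")
    case True
    have "\<tau> (inv g) x \<in> tFi n \<Omega> (\<sigma> (inv g) (\<sigma> g i))"
      using copy_action_tFi[OF inv_closed[OF g] True] .
    then have "\<tau> (inv g) x \<in> tFi n \<Omega> i"
      using vertices.action_inv_left[OF g] i by simp
    moreover have "x \<in> tF n \<Omega>"
      using True tFi_subset by blast
    ultimately show ?thesis
      using True label_action[OF p inv_closed[OF g]]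
      unfolding translate_def local_label_def by simp
  qed (simp add: translate_def local_label_def)
qed

lemma translate_inverse:
  assumes \<beta>: "\<beta> \<in> extensional (tFi n \<Omega> i)" and g: "g \<in> carrier G" and i: "i \<le> n"
  shows "translate (inv g) (\<sigma> g i) (translate g i \<beta>) = \<beta>"
proof
  fix x
  have i_back: "\<sigma> (inv g) (\<sigma> g i) = i"
    using vertices.action_inv_left[OF g] i by simp
  show "translate (inv g) (\<sigma> g i) (translate g i \<beta>) x = \<beta> x"
  proof (cases "x \<in> tFi n \<Omega> i")
    case True
    have "translate (inv g) (\<sigma> g i) (translate g i \<beta>) x = translate g i \<beta> (\<tau> g x)"
      unfolding translate_def[of "inv g"] i_back inv_inv[OF g] using True by (rule restrict_apply')
    also have "\<dots> = \<beta> (\<tau> (inv g) (\<tau> g x))"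
      unfolding translate_def using copy_action_tFi[OF g True] by (rule restrict_apply')
    also have "\<dots> = \<beta> x"
      using True tFi_subset copies.action_inv_left[OF g] by (metis subsetD)
    finally show ?thesis .
  next
    case False
    have "translate (inv g) (\<sigma> g i) (translate g i \<beta>) x = undefined"
      unfolding translate_def[of "inv g"] i_back using False by simp
    also have "\<dots> = \<beta> x"
      using extensional_arb[OF \<beta> False] by simp
    finally show ?thesis .
  qed
qed

lemma translate_in_local_labels_iff:
  assumes \<beta>: "\<beta> \<in> extensional (tFi n \<Omega> i)" and g: "g \<in> carrier G" and i: "i \<le> n"
  shows "translate g i \<beta> \<in> local_label (\<sigma> g i) ` (J \<times> carrier G) \<longleftrightarrow>
    \<beta> \<in> local_label i ` (J \<times> carrier G)"
proof
  assume "translate g i \<beta> \<in> local_label (\<sigma> g i) ` (J \<times> carrier G)"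
  then obtain q where q: "q \<in> J \<times> carrier G" "translate g i \<beta> = local_label (\<sigma> g i) q"
    by blast
  have gi: "\<sigma> g i \<le> n"
    using vertices.action_closed[OF g] i by simp
  have "\<beta> = translate (inv g) (\<sigma> g i) (local_label (\<sigma> g i) q)"
    using translate_inverse[OF \<beta> g i] q(2) by simp
  also have "\<dots> = local_label (\<sigma> (inv g) (\<sigma> g i)) (fst q, snd q \<otimes> inv (inv g))"
    using translate_local_label[OF q(1) inv_closed[OF g] gi] .
  also have "\<dots> = local_label i (fst q, snd q \<otimes> g)"
    using vertices.action_inv_left[OF g] i g by simp
  finally show "\<beta> \<in> local_label i ` (J \<times> carrier G)"
    using q(1) g by (auto simp: mem_Times_iff)
next
  assume "\<beta> \<in> local_label i ` (J \<times> carrier G)"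
  then obtain p where "p \<in> J \<times> carrier G" "\<beta> = local_label i p"
    by blast
  then show "translate g i \<beta> \<in> local_label (\<sigma> g i) ` (J \<times> carrier G)"
    using translate_local_label g i by (auto simp: mem_Times_iff)
qed

text \<open>The pairs chosen at two vertices of a common facet \<open>F\<close> agree, as both label the
  copy \<open>(F, 0)\<close>; connectedness propagates this to all vertices.\<close>
lemma locally_labelled_imp_labelled:
  assumes \<alpha>: "\<alpha> \<in> extensional (tF n \<Omega>)"
    and local: "\<forall>i\<le>n. restrict \<alpha> (tFi n \<Omega> i) \<in> local_label i ` (J \<times> carrier G)"
  shows "\<exists>p\<in>J \<times> carrier G. \<alpha> = restrict (label p) (tF n \<Omega>)"
proof -
  have "\<forall>i. \<exists>p. i \<le> n \<longrightarrow> p \<in> J \<times> carrier G \<and> restrict \<alpha> (tFi n \<Omega> i) = local_label i p"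
    using local by blast
  then obtain pf where pf: "\<And>i. i \<le> n \<Longrightarrow>
      pf i \<in> J \<times> carrier G \<and> restrict \<alpha> (tFi n \<Omega> i) = local_label i (pf i)"
    by (metis choice)
  have \<alpha>_at: "\<alpha> x = label (pf i) x" if "i \<le> n" "x \<in> tFi n \<Omega> i" for i x
    using fun_cong[OF conjunct2[OF pf[OF that(1)]], of x] that(2) unfolding local_label_def by simp
  have pf_facet: "pf a = pf b" if F: "facet n \<Omega> F" "a \<in> F" "b \<in> F" for F a b
  proof -
    have ab: "a \<le> n" "b \<le> n"
      using F facet_subset by blast+
    have "(F, 0) \<in> tFi n \<Omega> a" "(F, 0) \<in> tFi n \<Omega> b"
      using F facet_in_tFi by blast+
    then have "label (pf a) (F, 0) = label (pf b) (F, 0)"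
      using \<alpha>_at ab by metis
    then show ?thesis
      using label_eq_imp_eq pf ab \<open>(F, 0) \<in> tFi n \<Omega> a\<close> tFi_subset by blast
  qed
  have "\<alpha> = restrict (label (pf 0)) (tF n \<Omega>)"
  proof
    fix x
    show "\<alpha> x = restrict (label (pf 0)) (tF n \<Omega>) x"
    proof (cases "x \<in> tF n \<Omega>")
      case True
      then obtain i where i: "i \<le> n" "x \<in> tFi n \<Omega> i"
        using wsc_tF_covered[OF wsc] by blast
      have "pf i = pf 0"
        using wsc_connected_constant[where f = pf, OF connected pf_facet i(1) le0] .
      then show ?thesis
        using \<alpha>_at[OF i] True by simp
    next
      case False
      then show ?thesis
        using extensional_arb[OF \<alpha> False] by simp
    qed
  qed
  then show ?thesis
    using pf by blast
qed

end

lemma zero_in_vsp: "(\<lambda>_. 0) \<in> vsp A"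
  unfolding vsp_def by simp

lemma vsp_scale: "f \<in> vsp A \<Longrightarrow> (\<lambda>b. c * f b) \<in> vsp A"
  unfolding vsp_def by (auto elim: finite_subset[rotated])

locale free_wsc_invariant_decomp = free_wsc_labelling n \<Omega> G \<sigma> \<tau> J d
  for n \<Omega> and G :: "('g, 'm) monoid_scheme" (structure) and \<sigma> \<tau> and J :: "'j set" and d +
  fixes B :: "nat \<Rightarrow> 'b set" and v :: "(nat \<Rightarrow> 'b) \<Rightarrow> complex"
    and w :: "'j \<Rightarrow> nat \<Rightarrow> 'b \<Rightarrow> complex"
  assumes B_invariant: "\<forall>g\<in>carrier G. \<forall>i\<le>n. B (\<sigma> g i) = B i"
    and v_tensor: "v \<in> tensor_sp n B" and v_invariant: "G_invariant n G \<sigma> B v"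
    and w_vsp: "\<forall>j\<in>J. \<forall>i\<le>n. w j i \<in> vsp (B i)"
    and v_decomp: "v = (\<Sum>j\<in>J. etensor n (w j))"
begin

definition scale :: real where
  "scale = root (Suc n) (1 / real (card (carrier G)))"

definition local_vector :: "nat \<Rightarrow> 'j \<times> 'g \<Rightarrow> 'b \<Rightarrow> complex" where
  "local_vector i p = (\<lambda>b. complex_of_real scale * w (fst p) (\<sigma> (snd p) i) b)"

definition loc :: "nat \<Rightarrow> (nat set \<times> nat \<Rightarrow> nat) \<Rightarrow> 'b \<Rightarrow> complex" where
  "loc i \<beta> = (if \<beta> \<in> local_label i ` (J \<times> carrier G)
     then local_vector i (the_inv_into (J \<times> carrier G) (local_label i) \<beta>) else (\<lambda>_. 0))"

lemma scale_nonneg: "scale \<ge> 0"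
  unfolding scale_def by (simp add: real_root_ge_zero)

lemma scale_power: "complex_of_real scale ^ Suc n * of_nat (card (carrier G)) = 1"
proof -
  have "card (carrier G) > 0"
    using finite_carrier one_closed card_gt_0_iff by blast
  have "scale ^ Suc n = 1 / real (card (carrier G))"
    unfolding scale_def by (rule real_root_pow_pos2) simp_all
  then have "complex_of_real scale ^ Suc n = 1 / of_nat (card (carrier G))"
    by (metis of_real_power of_real_divide of_real_1 of_real_of_nat_eq)
  then show ?thesis
    using \<open>card (carrier G) > 0\<close> by simp
qed

lemma loc_local_label:
  assumes "p \<in> J \<times> carrier G" "i \<le> n"
  shows "loc i (local_label i p) = local_vector i p"
  using assms the_inv_into_f_f[OF inj_on_local_label] unfolding loc_def by auto

lemma loc_translate:
  assumes i: "i \<le> n" and g: "g \<in> carrier G" and \<beta>: "\<beta> \<in> extensional (tFi n \<Omega> i)"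
  shows "loc i \<beta> = loc (\<sigma> g i) (translate g i \<beta>)"
proof (cases "\<beta> \<in> local_label i ` (J \<times> carrier G)")
  case True
  then obtain p where p: "p \<in> J \<times> carrier G" "\<beta> = local_label i p"
    by blast
  have gi: "\<sigma> g i \<le> n"
    using vertices.action_closed[OF g] i by simp
  have p': "(fst p, snd p \<otimes> inv g) \<in> J \<times> carrier G"
    using p(1) g by (auto simp: mem_Times_iff)
  have "\<sigma> (snd p \<otimes> inv g) (\<sigma> g i) = \<sigma> (snd p) (\<sigma> (inv g) (\<sigma> g i))"
    using vertices.composition_rule gi g p(1) by (auto simp: mem_Times_iff)
  also have "\<dots> = \<sigma> (snd p) i"
    using vertices.action_inv_left g i by simp
  finally have "local_vector (\<sigma> g i) (fst p, snd p \<otimes> inv g) = local_vector i p"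
    unfolding local_vector_def by simp
  then show ?thesis
    using translate_local_label[OF p(1) g i] loc_local_label[OF p' gi]
      loc_local_label[OF p(1) i] p(2) by simp
next
  case False
  then have "translate g i \<beta> \<notin> local_label (\<sigma> g i) ` (J \<times> carrier G)"
    using translate_in_local_labels_iff[OF \<beta> g i] by blast
  then show ?thesis
    using False unfolding loc_def by simp
qed

lemma local_vector_vsp:
  assumes p: "p \<in> J \<times> carrier G" and i: "i \<le> n"
  shows "local_vector i p \<in> vsp (B i)"
proof -
  have "\<sigma> (snd p) i \<le> n" "snd p \<in> carrier G"
    using vertices.action_closed p i by (auto simp: mem_Times_iff)
  then have "w (fst p) (\<sigma> (snd p) i) \<in> vsp (B i)"
    using w_vsp B_invariant p i by (metis mem_Times_iff)
  then show ?thesis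
    unfolding local_vector_def by (rule vsp_scale)
qed

lemma loc_vsp: "i \<le> n \<Longrightarrow> loc i \<beta> \<in> vsp (B i)"
  using local_vector_vsp the_inv_into_into[OF inj_on_local_label] zero_in_vsp
  unfolding loc_def by auto

lemma sum_local_vectors: "(\<Sum>p\<in>J \<times> carrier G. etensor n (\<lambda>i. local_vector i p)) = v"
proof
  fix y
  have "(\<Sum>p\<in>J \<times> carrier G. etensor n (\<lambda>i. local_vector i p)) y
      = (\<Sum>h\<in>carrier G. \<Sum>j\<in>J. etensor n (\<lambda>i b. complex_of_real scale * w j (\<sigma> h i) b) y)"
    unfolding sum_fun_apply local_vector_def
    by (subst sum.swap) (simp add: sum.cartesian_product split_def)
  also have "\<dots> = (\<Sum>h\<in>carrier G.
      complex_of_real scale ^ Suc n * (\<Sum>j\<in>J. etensor n (\<lambda>i. w j (\<sigma> h i))) y)"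
    unfolding etensor_scale sum_fun_apply sum_distrib_left ..
  also have "\<dots> = (\<Sum>h\<in>carrier G. complex_of_real scale ^ Suc n * v y)"
    using G_invariant_permuted_decomp[OF vertices.group_action_axioms B_invariant v_tensor
        v_invariant v_decomp] by simp
  also have "\<dots> = complex_of_real scale ^ Suc n * of_nat (card (carrier G)) * v y"
    by (simp add: mult_ac)
  also have "\<dots> = v y"
    using scale_power by simp
  finally show "(\<Sum>p\<in>J \<times> carrier G. etensor n (\<lambda>i. local_vector i p)) y = v y" .
qed

text \<open>Only the global labellings \<open>label p\<close> contribute to the sum: any other one is
  somewhere not of the form \<open>local_label i p\<close>, where its local vector is zero.\<close>
lemma decomp_sum_eq_sum_local_vectors:
  "(\<Sum>\<alpha>\<in>tF n \<Omega> \<rightarrow>\<^sub>E d ` (J \<times> carrier G). etensor n (\<lambda>i. loc i (restrict \<alpha> (tFi n \<Omega> i))))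
    = (\<Sum>p\<in>J \<times> carrier G. etensor n (\<lambda>i. local_vector i p))"
    (is "(\<Sum>\<alpha>\<in>?A. ?E \<alpha>) = _")
proof -
  let ?glob = "\<lambda>p. restrict (label p) (tF n \<Omega>)"
  have "finite ?A"
    using finite_tF finite_J finite_carrier by (simp add: finite_PiE)
  moreover have glob_in: "?glob ` (J \<times> carrier G) \<subseteq> ?A"
    using label_in_image by auto
  moreover have "?E \<alpha> = 0" if \<alpha>: "\<alpha> \<in> ?A - ?glob ` (J \<times> carrier G)" for \<alpha>
  proof -
    have "\<alpha> \<in> extensional (tF n \<Omega>)" "\<alpha> \<notin> ?glob ` (J \<times> carrier G)"
      using \<alpha> by (auto simp: PiE_iff)
    then have "\<not> (\<forall>i\<le>n. restrict \<alpha> (tFi n \<Omega> i) \<in> local_label i ` (J \<times> carrier G))"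
      using locally_labelled_imp_labelled by blast
    then obtain i where "i \<le> n" "loc i (restrict \<alpha> (tFi n \<Omega> i)) = (\<lambda>_. 0)"
      unfolding loc_def by auto
    then show ?thesis
      by (rule etensor_eq_0)
  qed
  ultimately have "(\<Sum>\<alpha>\<in>?A. ?E \<alpha>) = (\<Sum>\<alpha>\<in>?glob ` (J \<times> carrier G). ?E \<alpha>)"
    by (intro sum.mono_neutral_right) auto
  also have "\<dots> = (\<Sum>p\<in>J \<times> carrier G. ?E (?glob p))"
  proof (rule sum.reindex_cong)
    obtain x where x: "x \<in> tF n \<Omega>"
      using wsc_tFi_nonempty[OF wsc, of 0] tFi_subset by blast
    show "inj_on ?glob (J \<times> carrier G)"
      using label_eq_imp_eq[OF _ _ x] x by (intro inj_onI) (metis restrict_apply')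
  qed simp_all
  also have "\<dots> = (\<Sum>p\<in>J \<times> carrier G. etensor n (\<lambda>i. local_vector i p))"
  proof (rule sum.cong)
    fix p assume p: "p \<in> J \<times> carrier G"
    have "restrict (?glob p) (tFi n \<Omega> i) = local_label i p" for i
      unfolding local_label_def by (simp add: Int_absorb1 tFi_subset)
    then show "?E (?glob p) = etensor n (\<lambda>i. local_vector i p)"
      using loc_local_label[OF p] by (intro etensor_cong) simp
  qed simp
  finally show ?thesis .
qed

lemma is_OG_decomp_loc: "is_OG_decomp n \<Omega> G \<sigma> \<tau> B v (d ` (J \<times> carrier G)) loc"
  unfolding is_OG_decomp_def
proof (intro conjI allI impI ballI)
  show "finite (d ` (J \<times> carrier G))"
    using finite_J finite_carrier by simp
  show "loc i \<beta> \<in> vsp (B i)" if "i \<le> n" for i \<beta>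
    using loc_vsp[OF that] .
  show "v = (\<Sum>\<alpha>\<in>tF n \<Omega> \<rightarrow>\<^sub>E d ` (J \<times> carrier G).
      etensor n (\<lambda>i. loc i (restrict \<alpha> (tFi n \<Omega> i))))"
    unfolding decomp_sum_eq_sum_local_vectors sum_local_vectors ..
  show "loc i \<beta> = loc (\<sigma> g i) (restrict (\<lambda>x. \<beta> (\<tau> (inv g) x)) (tFi n \<Omega> (\<sigma> g i)))"
    if "i \<le> n" "g \<in> carrier G" "\<beta> \<in> tFi n \<Omega> i \<rightarrow>\<^sub>E d ` (J \<times> carrier G)" for i g \<beta>
    using loc_translate[OF that(1,2)] that(3) unfolding translate_def by (simp add: PiE_iff)
qed

lemma loc_nonneg_multiple:
  assumes i: "i \<le> n" and \<beta>: "\<beta> \<in> tFi n \<Omega> i \<rightarrow>\<^sub>E d ` (J \<times> carrier G)"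
  shows "\<exists>j\<in>J. \<exists>k\<le>n. \<exists>c::real. c \<ge> 0 \<and> loc i \<beta> = (\<lambda>b. complex_of_real c * w j k b)"
proof (cases "\<beta> \<in> local_label i ` (J \<times> carrier G)")
  case True
  then obtain p where p: "p \<in> J \<times> carrier G" "\<beta> = local_label i p"
    by blast
  have "fst p \<in> J" "\<sigma> (snd p) i \<le> n"
    using p(1) vertices.action_closed i by (auto simp: mem_Times_iff)
  then show ?thesis
    using loc_local_label[OF p(1) i] p(2) scale_nonneg unfolding local_vector_def by blast
next
  case False
  text \<open>The local vector is zero, a multiple of any \<open>w j 0\<close>; \<open>J\<close> is nonempty because
    \<open>\<beta>\<close> takes values in the codes of \<open>J \<times> carrier G\<close>.\<close>
  obtain x where "x \<in> tFi n \<Omega> i"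
    using wsc_tFi_nonempty[OF wsc i] by blast
  then obtain j where "j \<in> J"
    using \<beta> by fastforce
  moreover have "loc i \<beta> = (\<lambda>b. complex_of_real 0 * w j 0 b)"
    using False unfolding loc_def by simp
  ultimately show ?thesis
    by blast
qed

end

lemma OG_decomp_of_elementary_decomp:
  fixes J :: "'j set" and w :: "'j \<Rightarrow> nat \<Rightarrow> 'b \<Rightarrow> complex"
    and G :: "('g, 'm) monoid_scheme"
  assumes "wsc n \<Omega>" "wsc_connected n \<Omega>" "free_wsc_action n \<Omega> G \<sigma> \<tau>"
    and "\<forall>g\<in>carrier G. \<forall>i\<le>n. B (\<sigma> g i) = B i"
    and "v \<in> tensor_sp n B" "G_invariant n G \<sigma> B v"
    and "finite J" "\<forall>j\<in>J. \<forall>i\<le>n. w j i \<in> vsp (B i)" "v = (\<Sum>j\<in>J. etensor n (w j))"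
  shows "\<exists>I loc. is_OG_decomp n \<Omega> G \<sigma> \<tau> B v I loc \<and>
    (\<forall>i\<le>n. \<forall>\<beta>\<in>tFi n \<Omega> i \<rightarrow>\<^sub>E I. \<exists>j\<in>J. \<exists>k\<le>n. \<exists>c::real. c \<ge> 0 \<and>
      loc i \<beta> = (\<lambda>b. complex_of_real c * w j k b))"
proof -
  interpret free_wsc n \<Omega> G \<sigma> \<tau>
    using assms(1-3) by unfold_locales
  obtain d :: "'j \<times> 'g \<Rightarrow> nat" where "inj_on d (J \<times> carrier G)"
    using finite_imp_inj_to_nat_seg[of "J \<times> carrier G"] assms(7) finite_carrier by blast
  then interpret free_wsc_invariant_decomp n \<Omega> G \<sigma> \<tau> J d B v w
    using assms by unfold_locales
  show ?thesis
    using is_OG_decomp_loc loc_nonneg_multiple by blast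
qed

lemma etensor_point:
  assumes x: "x \<in> extensional {..n}"
  shows "etensor n (\<lambda>i b. if b = x i then if i = 0 then a else 1 else 0) y = (if y = x then a else 0)"
proof (cases "y \<in> extensional {..n}")
  case True
  show ?thesis
  proof (cases "y = x")
    case True
    have "(\<Prod>i\<le>n. if i = 0 then a else 1) = a"
      by (simp add: prod.delta)
    then show ?thesis
      unfolding etensor_def using True x by simp
  next
    case False
    then obtain i where i: "i \<le> n" "y i \<noteq> x i"
      using \<open>y \<in> extensional {..n}\<close> x extensionalityI by (metis atMost_iff)
    then have "(\<Prod>i\<le>n. if y i = x i then if i = 0 then a else 1 else 0) = 0"
      by (intro prod_zero bexI[of _ i]) auto
    then show ?thesis
      unfolding etensor_def using False by simp
  qed
next
  case False
  then show ?thesis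
    using x unfolding etensor_def by auto
qed

lemma tensor_sp_elementary_decomp:
  fixes v :: "(nat \<Rightarrow> 'b) \<Rightarrow> complex"
  assumes "v \<in> tensor_sp n B"
  obtains J :: "(nat \<Rightarrow> 'b) set" and w
  where "finite J" "\<forall>j\<in>J. \<forall>i\<le>n. w j i \<in> vsp (B i)" "v = (\<Sum>j\<in>J. etensor n (w j))"
proof -
  define J where "J = {x. v x \<noteq> 0}"
  define w where "w x i = (\<lambda>b. if b = x i then if i = 0 then v x else 1 else 0)"
    for x :: "nat \<Rightarrow> 'b" and i
  have J: "finite J" "J \<subseteq> PiE {..n} B"
    using assms unfolding J_def tensor_sp_def by auto
  have w_vsp: "w x i \<in> vsp (B i)" if "x \<in> J" "i \<le> n" for x i
  proof -
    have "{b. w x i b \<noteq> 0} \<subseteq> {x i}" "x i \<in> B i"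
      using that J(2) unfolding w_def by auto
    then show ?thesis
      unfolding vsp_def using finite_subset by fastforce
  qed
  have "(\<Sum>j\<in>J. etensor n (w j) y) = v y" for y
  proof -
    have "(\<Sum>j\<in>J. etensor n (w j) y) = (\<Sum>j\<in>J. if y = j then v j else 0)"
      using J(2) unfolding w_def by (intro sum.cong refl etensor_point) (auto simp: PiE_def)
    also have "\<dots> = v y"
      using J(1) unfolding J_def by (simp add: sum.delta)
    finally show ?thesis .
  qed
  then have "v = (\<Sum>j\<in>J. etensor n (w j))"
    by (simp add: fun_eq_iff sum_fun_apply)
  with J(1) w_vsp show ?thesis
    using that by blast
qed

theorem theorem3p6:
  fixes n :: nat and \<Omega> :: "nat set \<Rightarrow> nat" and G :: "('g, 'm) monoid_scheme"
    and \<sigma> :: "'g \<Rightarrow> nat \<Rightarrow> nat" and \<tau> :: "'g \<Rightarrow> nat set \<times> nat \<Rightarrow> nat set \<times> nat"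
    and B :: "nat \<Rightarrow> 'b set" and v :: "(nat \<Rightarrow> 'b) \<Rightarrow> complex"
  assumes "wsc n \<Omega>" and "wsc_connected n \<Omega>"
    and "free_wsc_action n \<Omega> G \<sigma> \<tau>"
    and "\<forall>g\<in>carrier G. \<forall>i\<le>n. B (\<sigma> g i) = B i"
    and "v \<in> tensor_sp n B"
    and "G_invariant n G \<sigma> B v"
  shows "rank_OG n \<Omega> G \<sigma> \<tau> B v < \<infinity>
    \<and> (\<forall>(J :: 'j set) (w :: 'j \<Rightarrow> nat \<Rightarrow> 'b \<Rightarrow> complex).
          finite J \<and> (\<forall>j\<in>J. \<forall>i\<le>n. w j i \<in> vsp (B i)) \<and> v = (\<Sum>j\<in>J. etensor n (w j))
          \<longrightarrow> (\<exists>I loc. is_OG_decomp n \<Omega> G \<sigma> \<tau> B v I loc \<and>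
                (\<forall>i\<le>n. \<forall>\<beta>\<in>tFi n \<Omega> i \<rightarrow>\<^sub>E I. \<exists>j\<in>J. \<exists>k\<le>n. \<exists>c::real. c \<ge> 0 \<and>
                    loc i \<beta> = (\<lambda>b. complex_of_real c * w j k b))))"
proof (intro conjI allI impI)
  obtain J :: "(nat \<Rightarrow> 'b) set" and w
    where J: "finite J" "\<forall>j\<in>J. \<forall>i\<le>n. w j i \<in> vsp (B i)" "v = (\<Sum>j\<in>J. etensor n (w j))"
    using tensor_sp_elementary_decomp[OF assms(5)] .
  have "\<exists>I loc. is_OG_decomp n \<Omega> G \<sigma> \<tau> B v I loc"
    using OG_decomp_of_elementary_decomp[OF assms J] by blast
  then show "rank_OG n \<Omega> G \<sigma> \<tau> B v < \<infinity>"
    unfolding rank_OG_def by simp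
next
  fix J :: "'j set" and w :: "'j \<Rightarrow> nat \<Rightarrow> 'b \<Rightarrow> complex"
  assume "finite J \<and> (\<forall>j\<in>J. \<forall>i\<le>n. w j i \<in> vsp (B i)) \<and> v = (\<Sum>j\<in>J. etensor n (w j))"
  then show "\<exists>I loc. is_OG_decomp n \<Omega> G \<sigma> \<tau> B v I loc \<and>
    (\<forall>i\<le>n. \<forall>\<beta>\<in>tFi n \<Omega> i \<rightarrow>\<^sub>E I. \<exists>j\<in>J. \<exists>k\<le>n. \<exists>c::real. c \<ge> 0 \<and>
      loc i \<beta> = (\<lambda>b. complex_of_real c * w j k b))"
    by (elim conjE) (rule OG_decomp_of_elementary_decomp[OF assms])
qed

end
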